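(* Let $K\subset\mathbb R^m$ be a smooth cone, $A:\mathbb R^n\to\mathbb R^m$ linear, $b\in\mathbb R^m$, with $S=\{x: Ax+b\in K\}\neq\emptyset$, and assume $\{0\}\neq\operatorname{Im}A\cap K\subset\operatorname{bd}K$. Then: (i) if $\dim(\operatorname{Im}A)\neq1$ and $b\in\operatorname{Im}A$, then $\mathrm{ACQ}(S)$ does not hold and the inclusion $Ax+b\in K$ has no global error bound; (ii) if $\dim(\operatorname{Im}A)\neq1$ and $b\notin\operatorname{Im}A$, then $\mathrm{ACQ}(S)$ holds but the inclusion has no global error bound; (iii) if $\dim(\operatorname{Im}A)=1$, then the inclusion has a global error bound.
   Context: $\mathrm{ACQ}(S)$ means $A^*[N_K(Ax+b)]=N_S(x)$ for all $x\in S$, where $A^*$ is the adjoint and $N_D(x)$ the normal cone of a convex set. A global error bound means there is $\alpha>0$ with $d(x,S)\le\alpha\,d(Ax+b,K)$ for all $x\in\mathbb R^n$, $d(x,D)=\inf_{y\in D}\|x-y\|$. A cone is regular if pointed, closed, convex, with nonempty interior. A regular cone $C$ is smooth if every boundary point lies on an extreme ray of $C$ (a ray $\{\lambda x:\lambda\ge0\}$, $x\ne0$, which is a face of $C$) and, for every non-zero point $x$ of any extreme ray, $N_C(x)$ has dimension one. *)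

theory Defs
  imports "HOL-Analysis.Analysis"
begin

definition normal_cone :: "'a::real_inner set \<Rightarrow> 'a \<Rightarrow> 'a set" where
  "normal_cone D x = (if x \<in> D then {v. \<forall>y\<in>D. inner v (y - x) \<le> 0} else {})"

definition regular_cone :: "'a::euclidean_space set \<Rightarrow> bool" where
  "regular_cone C \<longleftrightarrow> cone C \<and> convex C \<and> closed C \<and> C \<inter> uminus ` C = {0}
     \<and> interior C \<noteq> {}"

definition ray :: "'a::real_vector \<Rightarrow> 'a set" where
  "ray x = {l *\<^sub>R x | l. l \<ge> 0}"

definition extreme_ray :: "'a::real_vector set \<Rightarrow> 'a set \<Rightarrow> bool" where
  "extreme_ray C R \<longleftrightarrow> (\<exists>x. x \<noteq> 0 \<and> R = ray x \<and> R face_of C)"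

definition smooth_cone :: "'a::euclidean_space set \<Rightarrow> bool" where
  "smooth_cone C \<longleftrightarrow> regular_cone C
     \<and> (\<forall>x\<in>frontier C. \<exists>R. extreme_ray C R \<and> x \<in> R)
     \<and> (\<forall>R x. extreme_ray C R \<and> x \<in> R \<and> x \<noteq> 0 \<longrightarrow> aff_dim (normal_cone C x) = 1)"

definition ACQ :: "('a::real_inner \<Rightarrow> 'b::real_inner) \<Rightarrow> 'b \<Rightarrow> 'b set \<Rightarrow> bool" where
  "ACQ A b K \<longleftrightarrow> (\<forall>x\<in>{x. A x + b \<in> K}.
      adjoint A ` normal_cone K (A x + b) = normal_cone {x. A x + b \<in> K} x)"

definition global_error_bound :: "('a::real_inner \<Rightarrow> 'b::real_inner) \<Rightarrow> 'b \<Rightarrow> 'b set \<Rightarrow> bool" where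
  "global_error_bound A b K \<longleftrightarrow> (\<exists>\<alpha>>0. \<forall>x.
      infdist x {x. A x + b \<in> K} \<le> \<alpha> * infdist (A x + b) K)"

end

theory Submission
  imports Defs
begin

text \<open>A smooth cone has a single unit normal e at each nonzero frontier point p, and the
  directions from projections of nearby outside points converge to e; hence every direction k
  with e \<bullet> k < 0 enters K from p. Since range A meets K only in its frontier, range A \<inter> K is
  the ray of a single d \<noteq> 0.

  (ii) If b \<notin> range A, the adjoint of the normal at A x + b never vanishes, so the solution set
  is locally a half-space there and ACQ reduces to a Farkas lemma for one inequality.
  (i) If b \<in> range A and range A contains some w \<noteq> 0 orthogonal to d, then both signs of the
  adjoint of w are normal to the solution set at a point mapped to d, while the adjoint image of
  the normal cone of K at d is one ray.
  No error bound: by rescaling, an error bound for A x + b \<in> K gives one for A x \<in> K, which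
  forces dist (d + \<tau> w, K) \<ge> c \<tau>; but choosing the sign of w with e \<bullet> w \<le> 0, the points
  d + \<tau> (w - \<eta> e) \<in> K show that this distance is at most \<tau> \<eta>, for every \<eta> > 0.
  (iii) If range A is the line of d, the inclusion reads b + t d \<in> K, i.e. t \<ge> t0, and the
  distance of b + t d to K grows linearly in t0 - t.\<close>

section \<open>Normal cones and projections\<close>

lemma normal_cone_iff: "v \<in> normal_cone D p \<longleftrightarrow> p \<in> D \<and> (\<forall>y\<in>D. inner v (y - p) \<le> 0)"
  by (simp add: normal_cone_def)

lemma normal_cone_scaleR: "v \<in> normal_cone D p \<Longrightarrow> 0 \<le> c \<Longrightarrow> c *\<^sub>R v \<in> normal_cone D p"
  by (auto simp: normal_cone_iff mult_nonneg_nonpos)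

lemma normal_cone_inner_interior_neg:
  fixes D :: "'a::real_inner set"
  assumes "v \<in> normal_cone D p" "v \<noteq> 0" "k \<in> interior D"
  shows "inner v (k - p) < 0"
proof -
  obtain \<epsilon> where \<epsilon>: "\<epsilon> > 0" "ball k \<epsilon> \<subseteq> D"
    using assms(3) mem_interior by blast
  define k' where "k' = k + (\<epsilon> / 2 / norm v) *\<^sub>R v"
  have "dist k k' < \<epsilon>"
    using \<epsilon> assms(2) by (simp add: k'_def dist_norm)
  then have "inner v (k' - p) \<le> 0"
    using \<epsilon> assms(1) by (auto simp: normal_cone_iff)
  moreover have "inner v (k' - p) = inner v (k - p) + \<epsilon> / 2 * norm v"
    using assms(2) by (simp add: k'_def inner_diff_right inner_add_right dot_square_norm power2_eq_square)
  moreover have "\<epsilon> / 2 * norm v > 0"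
    using \<epsilon> assms(2) by simp
  ultimately show ?thesis by linarith
qed

lemma normal_cone_at_interior:
  fixes D :: "'a::real_inner set"
  assumes "x \<in> interior D"
  shows "normal_cone D x = {0}"
  using normal_cone_inner_interior_neg[OF _ _ assms] interior_subset[of D] assms
  by (fastforce simp: normal_cone_iff)

lemma normal_cone_pointed:
  fixes D :: "'a::real_inner set"
  assumes "interior D \<noteq> {}" "u \<in> normal_cone D p" "- u \<in> normal_cone D p"
  shows "u = 0"
proof (rule ccontr)
  assume "u \<noteq> 0"
  obtain k where k: "k \<in> interior D"
    using assms(1) by blast
  have "inner u (k - p) < 0" "inner (- u) (k - p) < 0"
    using normal_cone_inner_interior_neg[OF assms(2) _ k] normal_cone_inner_interior_neg[OF assms(3) _ k] \<open>u \<noteq> 0\<close>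
    by auto
  then show False by simp
qed

lemma normal_cone_limit:
  fixes D :: "'a::real_inner set"
  assumes "closed D" "\<And>n. v n \<in> normal_cone D (y n)" "v \<longlonglongrightarrow> l" "y \<longlonglongrightarrow> p"
  shows "l \<in> normal_cone D p"
proof -
  have "p \<in> D"
    using assms closed_sequentially[of D y p] by (auto simp: normal_cone_iff)
  moreover have "inner l (k - p) \<le> 0" if "k \<in> D" for k
  proof (rule LIMSEQ_le_const2)
    show "(\<lambda>n. inner (v n) (k - y n)) \<longlonglongrightarrow> inner l (k - p)"
      by (intro tendsto_intros assms)
    show "\<exists>N. \<forall>n\<ge>N. inner (v n) (k - y n) \<le> 0"
      using assms(2) that by (auto simp: normal_cone_iff)
  qed
  ultimately show ?thesis by (simp add: normal_cone_iff)
qed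

lemma infdist_greatest:
  assumes "S \<noteq> {}" "\<And>y. y \<in> S \<Longrightarrow> c \<le> dist x y"
  shows "c \<le> infdist x S"
  using assms by (auto simp: infdist_notempty intro: cINF_greatest)

lemma inner_normal_cone_le_infdist:
  fixes D :: "'a::real_inner set"
  assumes "e \<in> normal_cone D p" "norm e = 1"
  shows "inner e (z - p) \<le> infdist z D"
proof (rule infdist_greatest)
  show "D \<noteq> {}"
    using assms(1) by (auto simp: normal_cone_iff)
  fix k assume "k \<in> D"
  then have "inner e (z - p) \<le> inner e (z - k)"
    using assms(1) by (auto simp: normal_cone_iff inner_diff_right)
  also have "\<dots> \<le> dist z k"
    using norm_cauchy_schwarz[of e "z - k"] assms(2) by (simp add: dist_norm)
  finally show "inner e (z - p) \<le> dist z k" .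
qed

lemma interior_exists_step:
  fixes D :: "'a::real_normed_vector set"
  assumes "p \<in> interior D"
  shows "\<exists>\<eta>>0. p + \<eta> *\<^sub>R v \<in> D"
proof -
  obtain \<epsilon> where "\<epsilon> > 0" and ball: "ball p \<epsilon> \<subseteq> D"
    using assms mem_interior by blast
  define \<eta> where "\<eta> = \<epsilon> / (2 * (norm v + 1))"
  have "norm v + 1 > 0"
    using norm_ge_zero[of v] by linarith
  then have "\<eta> > 0"
    using \<open>\<epsilon> > 0\<close> by (simp add: \<eta>_def)
  have "dist p (p + \<eta> *\<^sub>R v) = \<eta> * norm v"
    using \<open>\<eta> > 0\<close> by (simp add: dist_norm)
  also have "\<dots> \<le> \<eta> * (norm v + 1)"
    using \<open>\<eta> > 0\<close> by simp
  also have "\<dots> = \<epsilon> / 2"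
    using \<open>norm v + 1 > 0\<close> by (simp add: \<eta>_def field_simps)
  also have "\<dots> < \<epsilon>"
    using \<open>\<epsilon> > 0\<close> by simp
  finally show ?thesis
    using ball \<open>\<eta> > 0\<close> by auto
qed

lemma infdist_closest_point:
  fixes D :: "'a::euclidean_space set"
  assumes "closed D" "D \<noteq> {}"
  shows "infdist z D = norm (z - closest_point D z)"
  using setdist_closest_point[OF assms] by (simp add: infdist_eq_setdist dist_norm)

lemma sgn_closest_point_normal_cone:
  fixes D :: "'a::euclidean_space set"
  assumes "convex D" "closed D" "D \<noteq> {}"
  shows "sgn (z - closest_point D z) \<in> normal_cone D (closest_point D z)"
  using closest_point_dot[OF assms(1,2)] closest_point_in_set[OF assms(2,3)]
  by (auto simp: normal_cone_iff sgn_div_norm mult_nonneg_nonpos)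

lemma infdist_le_inner_sgn_closest_point:
  fixes D :: "'a::euclidean_space set"
  assumes "convex D" "closed D" "p \<in> D"
  shows "infdist z D \<le> inner (sgn (z - closest_point D z)) (z - p)"
proof -
  define y where "y = closest_point D z"
  have "inner (sgn (z - y)) (p - y) \<le> 0"
    using sgn_closest_point_normal_cone[OF assms(1,2)] assms(3) by (auto simp: y_def normal_cone_iff)
  moreover have "inner (sgn (z - y)) (z - y) = norm (z - y)"
    by (cases "z = y") (simp_all add: sgn_div_norm dot_square_norm power2_eq_square)
  moreover have "infdist z D = norm (z - y)"
    using infdist_closest_point[OF assms(2)] assms(3) by (auto simp: y_def)
  ultimately show ?thesis
    by (simp add: y_def[symmetric] inner_diff_right)
qed

lemma closest_point_direction_near_unique_normal:
  fixes D :: "'a::euclidean_space set"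
  assumes cvx: "convex D" and cl: "closed D" and p: "p \<in> D"
    and N: "normal_cone D p = ray e" and e: "norm e = 1" and "\<delta> > 0"
  shows "\<exists>\<epsilon>>0. \<forall>z. z \<notin> D \<longrightarrow> dist z p < \<epsilon> \<longrightarrow> norm (sgn (z - closest_point D z) - e) < \<delta>"
proof (rule ccontr)
  define v where "v z = sgn (z - closest_point D z)" for z
  assume contra: "\<not> ?thesis"
  have bad: "\<exists>z. z \<notin> D \<and> dist z p < \<epsilon> \<and> \<delta> \<le> norm (v z - e)" if "\<epsilon> > 0" for \<epsilon>
    using that contra unfolding v_def by (meson not_less)
  have "\<forall>n. \<exists>z. z \<notin> D \<and> dist z p < inverse (real (Suc n)) \<and> \<delta> \<le> norm (v z - e)"
    by (intro allI bad) simp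
  then obtain z where zD: "\<And>n. z n \<notin> D" and zp: "\<And>n. dist (z n) p < inverse (real (Suc n))"
    and far: "\<And>n. \<delta> \<le> norm (v (z n) - e)"
    by metis
  have "D \<noteq> {}" using p by auto
  have "norm (z n - p) \<le> inverse (real (Suc n))" for n
    using zp[of n] by (simp add: dist_norm)
  then have "(\<lambda>n. z n - p) \<longlonglongrightarrow> 0"
    by (intro Lim_null_comparison[OF always_eventually LIMSEQ_inverse_real_of_nat]) blast
  then have z_lim: "z \<longlonglongrightarrow> p"
    by (simp add: LIM_zero_iff)
  have proj_lim: "(\<lambda>n. closest_point D (z n)) \<longlonglongrightarrow> p"
    using isCont_tendsto_compose[OF continuous_at_closest_point[OF cvx cl \<open>D \<noteq> {}\<close>] z_lim]
    by (simp add: closest_point_self[OF p])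
  have unit: "norm (v (z n)) = 1" for n
    using zD[of n] closest_point_in_set[OF cl \<open>D \<noteq> {}\<close>, of "z n"] by (auto simp: v_def norm_sgn)
  then have "bounded (range (\<lambda>n. v (z n)))"
    by (auto simp: bounded_iff)
  then obtain l r where r: "strict_mono r" and vl: "((\<lambda>n. v (z n)) \<circ> r) \<longlonglongrightarrow> l"
    using bounded_imp_convergent_subsequence by blast
  have "norm l = 1"
    using tendsto_norm[OF vl] unit LIMSEQ_unique[of "\<lambda>n. 1::real"] by (simp add: o_def)
  moreover have "l \<in> normal_cone D p"
    using normal_cone_limit[OF cl _ vl LIMSEQ_subseq_LIMSEQ[OF proj_lim r]]
      sgn_closest_point_normal_cone[OF cvx cl \<open>D \<noteq> {}\<close>]
    by (simp add: v_def o_def)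
  ultimately have "l = e"
    using N e by (auto simp: ray_def)
  then have "(\<lambda>n. norm (v (z (r n)) - e)) \<longlonglongrightarrow> 0"
    using tendsto_norm[OF tendsto_diff[OF vl tendsto_const[of e]]] by (simp add: o_def)
  then have "\<delta> \<le> 0"
    using far by (intro LIMSEQ_le_const) auto
  then show False
    using \<open>\<delta> > 0\<close> by simp
qed

text \<open>At a point with a single unit normal e, every direction k with e \<bullet> k < 0 enters the set:
  otherwise the projection directions of nearby points p + \<tau> k, which tend to e, would make
  a positive angle with k.\<close>
lemma feasible_direction_unique_normal:
  fixes D :: "'a::euclidean_space set"
  assumes cvx: "convex D" and cl: "closed D" and p: "p \<in> D"
    and N: "normal_cone D p = ray e" and e: "norm e = 1" and k: "inner e k < 0"
  shows "\<exists>\<tau>>0. p + \<tau> *\<^sub>R k \<in> D"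
proof -
  have "k \<noteq> 0" using k by auto
  define \<delta> where "\<delta> = - inner e k / (2 * norm k)"
  have "\<delta> > 0"
    using k \<open>k \<noteq> 0\<close> by (simp add: \<delta>_def divide_neg_pos)
  then obtain \<epsilon> where "\<epsilon> > 0"
    and near: "\<And>z. z \<notin> D \<Longrightarrow> dist z p < \<epsilon> \<Longrightarrow> norm (sgn (z - closest_point D z) - e) < \<delta>"
    using closest_point_direction_near_unique_normal[OF cvx cl p N e] by blast
  define \<tau> where "\<tau> = \<epsilon> / (2 * norm k)"
  have "\<tau> > 0"
    using \<open>\<epsilon> > 0\<close> \<open>k \<noteq> 0\<close> by (simp add: \<tau>_def)
  define z where "z = p + \<tau> *\<^sub>R k"
  have "z \<in> D"
  proof (rule ccontr)
    assume "z \<notin> D"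
    define v where "v = sgn (z - closest_point D z)"
    have "dist z p < \<epsilon>"
      using \<open>\<epsilon> > 0\<close> \<open>k \<noteq> 0\<close> by (simp add: z_def dist_norm \<tau>_def)
    then have "norm (v - e) < \<delta>"
      using near \<open>z \<notin> D\<close> by (simp add: v_def)
    have "0 < infdist z D"
      using infdist_pos_not_in_closed[OF cl _ \<open>z \<notin> D\<close>] p by auto
    also have "\<dots> \<le> \<tau> * inner v k"
      using infdist_le_inner_sgn_closest_point[OF cvx cl p, of z] by (simp add: v_def z_def)
    finally have "0 < inner v k"
      using \<open>\<tau> > 0\<close> by (simp add: zero_less_mult_iff)
    have "inner (v - e) k \<le> \<delta> * norm k"
      using norm_cauchy_schwarz[of "v - e" k] \<open>norm (v - e) < \<delta>\<close>
      by (smt (verit) mult_right_mono norm_ge_zero)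
    also have "\<dots> = - inner e k / 2"
      using \<open>k \<noteq> 0\<close> by (simp add: \<delta>_def)
    finally show False
      using \<open>0 < inner v k\<close> k by (simp add: inner_diff_left)
  qed
  then show ?thesis
    using \<open>\<tau> > 0\<close> by (auto simp: z_def)
qed

section \<open>Linear algebra\<close>

lemma dim_eq_1_subset_span_singleton:
  fixes S :: "'a::euclidean_space set"
  assumes "dim S = 1" "u \<in> S" "u \<noteq> 0"
  shows "S \<subseteq> span {u}"
proof
  fix v assume "v \<in> S"
  show "v \<in> span {u}"
  proof (rule ccontr)
    assume "v \<notin> span {u}"
    then have "independent {v, u}" "v \<noteq> u"
      using assms(3) span_base[of v "{v}"] by (auto simp: independent_insert)
    then have "card {v, u} \<le> dim S"
      using \<open>v \<in> S\<close> assms(2) by (intro independent_card_le_dim) auto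
    then show False
      using \<open>v \<noteq> u\<close> assms(1) by simp
  qed
qed

lemma subspace_orthogonal_nonzero:
  fixes L :: "'a::euclidean_space set"
  assumes L: "subspace L" and d: "d \<in> L" "d \<noteq> 0" and dim: "dim L \<noteq> 1"
  shows "\<exists>w\<in>L. w \<noteq> 0 \<and> inner w d = 0"
proof (rule ccontr)
  assume none: "\<not> ?thesis"
  have "L \<subseteq> span {d}"
  proof
    fix z assume "z \<in> L"
    define w where "w = z - (inner z d / inner d d) *\<^sub>R d"
    have "w \<in> L"
      using L \<open>z \<in> L\<close> d(1) by (simp add: w_def subspace_diff subspace_scale)
    moreover have "inner w d = 0"
      using d(2) by (simp add: w_def inner_diff_left)
    ultimately have "z = (inner z d / inner d d) *\<^sub>R d"
      using none by (auto simp: w_def)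
    then show "z \<in> span {d}"
      by (metis span_base span_scale singletonI)
  qed
  then have "dim L \<le> 1"
    using dim_subset[of L "span {d}"] d(2) by simp
  moreover have "1 \<le> dim L"
    using dim_subset[of "{d}" L] d by simp
  ultimately show False
    using dim by simp
qed

lemma halfspace_implies_nonneg_multiple:
  fixes a g :: "'a::real_inner"
  assumes "a \<noteq> 0" and imp: "\<And>h. inner a h < 0 \<Longrightarrow> inner g h \<le> 0"
  shows "\<exists>l\<ge>0. g = l *\<^sub>R a"
proof -
  have aa: "inner a a > 0"
    using assms(1) by simp
  define l where "l = inner g a / inner a a"
  define h where "h = g - l *\<^sub>R a"
  have ah: "inner a h = 0"
    using aa by (simp add: h_def l_def inner_diff_right inner_commute)
  have gh: "inner g h = inner h h"
    using ah by (simp add: h_def inner_diff_left inner_commute)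
  have small: "inner h h \<le> s * inner g a" if "s > 0" for s
  proof -
    have "inner g (h - s *\<^sub>R a) \<le> 0"
      using imp[of "h - s *\<^sub>R a"] ah aa that by (simp add: inner_diff_right)
    then show ?thesis
      using gh by (simp add: inner_diff_right)
  qed
  have "h = 0"
  proof (rule ccontr)
    assume "h \<noteq> 0"
    define s where "s = inner h h / (2 * (\<bar>inner g a\<bar> + 1))"
    have "s > 0"
      using \<open>h \<noteq> 0\<close> by (simp add: s_def add_pos_nonneg)
    have "inner h h \<le> s * inner g a"
      using small[OF \<open>s > 0\<close>] .
    also have "\<dots> \<le> s * (\<bar>inner g a\<bar> + 1)"
      using \<open>s > 0\<close> by (intro mult_left_mono) auto
    also have "\<dots> = inner h h / 2"
      using abs_ge_zero[of "inner g a"] unfolding s_def by (simp add: field_simps)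
    finally show False
      using \<open>h \<noteq> 0\<close> by simp
  qed
  moreover have "l \<ge> 0"
    using imp[of "- a"] aa by (simp add: l_def)
  ultimately show ?thesis
    by (auto simp: h_def)
qed

section \<open>Smooth cones\<close>

lemma regular_cone_convex_cone: "regular_cone K \<Longrightarrow> convex_cone K"
  by (auto simp: regular_cone_def convex_cone_def conic_def cone_def)

lemma regular_cone_pointed: "regular_cone K \<Longrightarrow> x \<in> K \<Longrightarrow> - x \<in> K \<Longrightarrow> x = 0"
  unfolding regular_cone_def by (metis IntI rev_image_eqI minus_minus singletonD)

lemma smooth_cone_regular: "smooth_cone K \<Longrightarrow> regular_cone K"
  by (simp add: smooth_cone_def)

lemma ray_scaleR: "x \<in> ray r \<Longrightarrow> 0 \<le> c \<Longrightarrow> c *\<^sub>R x \<in> ray r"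
  unfolding ray_def by (auto intro: exI[where x = "c * _"])

lemma ray_pointed: "u \<in> ray a \<Longrightarrow> - u \<in> ray a \<Longrightarrow> u = (0::'a::real_vector)"
proof -
  assume "u \<in> ray a" "- u \<in> ray a"
  then obtain l m where lm: "l \<ge> 0" "m \<ge> 0" "u = l *\<^sub>R a" "- u = m *\<^sub>R a"
    by (auto simp: ray_def)
  then have "(l + m) *\<^sub>R a = 0"
    using lm(3,4)[symmetric] by (simp add: scaleR_add_left)
  then show "u = 0"
    using lm by (auto simp: add_nonneg_eq_0_iff)
qed

lemma linear_image_ray:
  assumes "linear f"
  shows "f ` ray a = ray (f a)"
proof -
  have "ray a = (\<lambda>l. l *\<^sub>R a) ` {0..}" "ray (f a) = (\<lambda>l. l *\<^sub>R f a) ` {0..}"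
    by (auto simp: ray_def)
  then show ?thesis
    by (simp add: image_image linear_scale[OF assms])
qed

lemma smooth_cone_add_frontier_ray:
  fixes K :: "'a::euclidean_space set"
  assumes sm: "smooth_cone K" and p: "p \<in> K" and q: "q \<in> K" "q \<noteq> 0"
    and fr: "p + q \<in> frontier K"
  shows "p \<in> ray q"
proof (cases "p = q")
  case True
  then show ?thesis
    by (auto simp: ray_def intro: exI[of _ 1])
next
  case False
  obtain r where R: "ray r face_of K" "p + q \<in> ray r"
    using sm fr by (auto simp: smooth_cone_def extreme_ray_def)
  have K2: "2 *\<^sub>R p \<in> K" "2 *\<^sub>R q \<in> K"
    using p q convex_cone_scaleR[OF regular_cone_convex_cone[OF smooth_cone_regular[OF sm]]] by auto
  have "p + q \<in> open_segment (2 *\<^sub>R p) (2 *\<^sub>R q)"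
    using midpoint_in_open_segment[of "2 *\<^sub>R p" "2 *\<^sub>R q"] False
    by (simp add: midpoint_def scaleR_add_right)
  then have "2 *\<^sub>R p \<in> ray r" "2 *\<^sub>R q \<in> ray r"
    using face_ofD[OF R(1) _ K2 R(2)] by auto
  then have "p \<in> ray r" "q \<in> ray r"
    using ray_scaleR[of "2 *\<^sub>R p" r "1 / 2"] ray_scaleR[of "2 *\<^sub>R q" r "1 / 2"] by simp_all
  then obtain l1 l2 where l: "l1 \<ge> 0" "l2 \<ge> 0" "p = l1 *\<^sub>R r" "q = l2 *\<^sub>R r"
    by (auto simp: ray_def)
  then have "l2 \<noteq> 0"
    using q(2) by auto
  then have "p = (l1 / l2) *\<^sub>R q"
    using l by simp
  then show ?thesis
    using l unfolding ray_def by (auto intro: exI[where x = "l1 / l2"])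
qed

lemma smooth_cone_normal_cone_ray:
  fixes K :: "'a::euclidean_space set"
  assumes sm: "smooth_cone K" and pf: "p \<in> frontier K" and "p \<noteq> 0"
  shows "\<exists>e. norm e = 1 \<and> normal_cone K p = ray e"
proof -
  define N where "N = normal_cone K p"
  have reg: "regular_cone K"
    using sm by (rule smooth_cone_regular)
  have "p \<in> K"
    using pf reg by (auto simp: regular_cone_def frontier_def)
  then have "0 \<in> N"
    by (simp add: N_def normal_cone_iff)
  have "aff_dim N = 1"
    using sm pf \<open>p \<noteq> 0\<close> by (auto simp: smooth_cone_def N_def)
  then have dimN: "dim N = 1"
    using aff_dim_eq_dim[of 0 N] \<open>0 \<in> N\<close> by (simp add: hull_inc)
  obtain u where u: "u \<in> N" "u \<noteq> 0"
    using dim_subset[of N "{0}"] dimN by force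
  have "v \<in> ray (sgn u)" if "v \<in> N" for v
  proof -
    obtain c where c: "v = c *\<^sub>R u"
      using dim_eq_1_subset_span_singleton[OF dimN u] \<open>v \<in> N\<close> by (auto simp: span_singleton)
    have "c \<ge> 0"
    proof (rule ccontr)
      assume "\<not> c \<ge> 0"
      then have "- u \<in> N"
        using normal_cone_scaleR[of v K p "- 1 / c"] that c by (simp add: N_def)
      then show False
        using normal_cone_pointed[of K u p] reg u by (simp add: regular_cone_def N_def)
    qed
    then show ?thesis
      using c u(2) by (auto simp: ray_def sgn_div_norm intro!: exI[of _ "c * norm u"])
  qed
  moreover have "l *\<^sub>R sgn u \<in> N" if "l \<ge> 0" for l
    using normal_cone_scaleR[of u K p "l * inverse (norm u)"] u that by (simp add: N_def sgn_div_norm)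
  ultimately have "N = ray (sgn u)"
    by (auto simp: ray_def)
  then show ?thesis
    using u(2) norm_sgn[of u] by (auto simp: N_def)
qed

text \<open>p + d lies on the supporting hyperplane of e at p, hence on the frontier.\<close>
lemma smooth_cone_orthogonal_normal_ray:
  fixes K :: "'a::euclidean_space set"
  assumes sm: "smooth_cone K" and p: "p \<in> K" and e: "e \<in> normal_cone K p" "e \<noteq> 0"
    and d: "d \<in> K" "d \<noteq> 0" and ed: "inner e d = 0"
  shows "p \<in> ray d"
proof (rule smooth_cone_add_frontier_ray[OF sm p d])
  have "p + d \<in> K"
    using convex_cone_add[OF regular_cone_convex_cone[OF smooth_cone_regular[OF sm]] p d(1)] .
  moreover have "p + d \<notin> interior K"
    using normal_cone_inner_interior_neg[OF e, of "p + d"] ed by auto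
  moreover have "closed K"
    using sm by (simp add: smooth_cone_def regular_cone_def)
  ultimately show "p + d \<in> frontier K"
    by (simp add: frontier_def)
qed

lemma subspace_inter_smooth_cone_ray:
  fixes K :: "'a::euclidean_space set"
  assumes sm: "smooth_cone K" and L: "subspace L" and d: "d \<in> L" "d \<in> K" "d \<noteq> 0"
    and fr: "L \<inter> K \<subseteq> frontier K"
  shows "L \<inter> K \<subseteq> ray d"
proof
  fix z assume z: "z \<in> L \<inter> K"
  have "z + d \<in> L \<inter> K"
    using z d L convex_cone_add[OF regular_cone_convex_cone[OF smooth_cone_regular[OF sm]]]
    by (auto simp: subspace_add)
  then show "z \<in> ray d"
    using smooth_cone_add_frontier_ray[OF sm _ d(2,3)] z fr by blast
qed

section \<open>Abadie's constraint qualification\<close>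

lemma range_linear_subspace: "linear A \<Longrightarrow> subspace (range A)"
  using linear_subspace_image[of A UNIV] by simp

lemma continuous_at_affine:
  fixes A :: "'a::euclidean_space \<Rightarrow> 'b::euclidean_space"
  shows "linear A \<Longrightarrow> continuous (at x) (\<lambda>x. A x + b)"
  by (intro continuous_intros linear_continuous_at) (simp add: linear_conv_bounded_linear)

lemma adjoint_image_normal_cone_subset:
  fixes A :: "'a::euclidean_space \<Rightarrow> 'b::euclidean_space"
  assumes "linear A"
  shows "adjoint A ` normal_cone K (A x + b) \<subseteq> normal_cone {x. A x + b \<in> K} x"
proof
  fix g assume "g \<in> adjoint A ` normal_cone K (A x + b)"
  then obtain u where u: "u \<in> normal_cone K (A x + b)" "g = adjoint A u"
    by blast
  have "inner g (y - x) = inner u ((A y + b) - (A x + b))" for y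
    using u(2) adjoint_clauses(2)[OF assms] linear_diff[OF assms] by simp
  then show "g \<in> normal_cone {x. A x + b \<in> K} x"
    using u(1) by (auto simp: normal_cone_iff)
qed

lemma normal_cone_preimage_interior:
  fixes A :: "'a::euclidean_space \<Rightarrow> 'b::euclidean_space"
  assumes "linear A" "A x + b \<in> interior K"
  shows "normal_cone {x. A x + b \<in> K} x = {0}"
proof -
  have "open ((\<lambda>x. A x + b) -` interior K)"
    using continuous_at_affine[OF assms(1)] by (intro continuous_open_vimage) auto
  moreover have "(\<lambda>x. A x + b) -` interior K \<subseteq> {x. A x + b \<in> K}"
    using interior_subset by auto
  ultimately have "x \<in> interior {x. A x + b \<in> K}"
    using assms(2) interior_maximal by blast
  then show ?thesis
    by (rule normal_cone_at_interior)
qed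

text \<open>With a unique unit normal e at A x + b whose adjoint a is nonzero, every h with
  a \<bullet> h < 0 is a feasible direction of the solution set, so by the Farkas lemma its normals
  lie on the ray of a.\<close>
lemma normal_cone_preimage_unique_normal:
  fixes K :: "'b::euclidean_space set" and A :: "'a::euclidean_space \<Rightarrow> 'b"
  assumes cvx: "convex K" and cl: "closed K" and lin: "linear A" and p: "A x + b \<in> K"
    and e: "normal_cone K (A x + b) = ray e" "norm e = 1" and a: "adjoint A e \<noteq> 0"
  shows "normal_cone {x. A x + b \<in> K} x \<subseteq> adjoint A ` normal_cone K (A x + b)"
proof
  fix g assume g: "g \<in> normal_cone {x. A x + b \<in> K} x"
  have "inner g h \<le> 0" if ah: "inner (adjoint A e) h < 0" for h
  proof -
    obtain \<tau> where "\<tau> > 0" "A x + b + \<tau> *\<^sub>R A h \<in> K"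
      using feasible_direction_unique_normal[OF cvx cl p e, of "A h"] ah adjoint_clauses(2)[OF lin]
      by auto
    then have "A (x + \<tau> *\<^sub>R h) + b \<in> K"
      by (simp add: linear_add[OF lin] linear_scale[OF lin] algebra_simps)
    then have "inner g ((x + \<tau> *\<^sub>R h) - x) \<le> 0"
      using g by (auto simp: normal_cone_iff)
    then show ?thesis
      using \<open>\<tau> > 0\<close> by (simp add: mult_le_0_iff)
  qed
  then obtain l where "l \<ge> 0" "g = l *\<^sub>R adjoint A e"
    using halfspace_implies_nonneg_multiple[OF a] by blast
  then have "g \<in> ray (adjoint A e)"
    by (auto simp: ray_def)
  then show "g \<in> adjoint A ` normal_cone K (A x + b)"
    using e(1) linear_image_ray[OF adjoint_linear[OF lin], of e] by simp
qed

text \<open>If the adjoint of e vanished, e would be orthogonal to d, putting A x + b on the ray of d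
  and b into range A.\<close>
lemma adjoint_normal_cone_nonzero:
  fixes K :: "'b::euclidean_space set" and A :: "'a::euclidean_space \<Rightarrow> 'b"
  assumes sm: "smooth_cone K" and lin: "linear A" and d: "d \<in> range A" "d \<in> K" "d \<noteq> 0"
    and b: "b \<notin> range A" and p: "A x + b \<in> K"
    and e: "e \<in> normal_cone K (A x + b)" "e \<noteq> 0"
  shows "adjoint A e \<noteq> 0"
proof
  assume "adjoint A e = 0"
  then have "inner e d = 0"
    using d(1) adjoint_clauses(2)[OF lin] by (metis inner_zero_left rangeE)
  then obtain l where "A x + b = l *\<^sub>R d"
    using smooth_cone_orthogonal_normal_ray[OF sm p e d(2,3)] by (auto simp: ray_def)
  moreover obtain xd where "d = A xd"
    using d(1) by blast
  ultimately have "b = A (l *\<^sub>R xd - x)"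
    by (simp add: linear_diff[OF lin] linear_scale[OF lin] algebra_simps)
  then show False
    using b by blast
qed

lemma ACQ_if_not_in_range:
  fixes K :: "'b::euclidean_space set" and A :: "'a::euclidean_space \<Rightarrow> 'b"
  assumes sm: "smooth_cone K" and lin: "linear A" and d: "d \<in> range A" "d \<in> K" "d \<noteq> 0"
    and b: "b \<notin> range A"
  shows "ACQ A b K"
  unfolding ACQ_def
proof (intro ballI equalityI)
  fix x assume "x \<in> {x. A x + b \<in> K}"
  then have p: "A x + b \<in> K"
    by simp
  have reg: "regular_cone K"
    using sm by (rule smooth_cone_regular)
  show "adjoint A ` normal_cone K (A x + b) \<subseteq> normal_cone {x. A x + b \<in> K} x"
    using lin by (rule adjoint_image_normal_cone_subset)
  show "normal_cone {x. A x + b \<in> K} x \<subseteq> adjoint A ` normal_cone K (A x + b)"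
  proof (cases "A x + b \<in> interior K")
    case True
    then show ?thesis
      using normal_cone_preimage_interior[OF lin] p linear_0[OF adjoint_linear[OF lin]]
      by (auto simp: normal_cone_iff image_iff intro: bexI[of _ 0])
  next
    case False
    then have "A x + b \<in> frontier K"
      using p reg by (simp add: frontier_def regular_cone_def)
    moreover have "A x + b \<noteq> 0"
      using b linear_neg[OF lin] by (metis add_eq_0_iff rangeI)
    ultimately obtain e where e: "norm e = 1" "normal_cone K (A x + b) = ray e"
      using smooth_cone_normal_cone_ray[OF sm] by blast
    then have "e \<in> normal_cone K (A x + b)" "e \<noteq> 0"
      by (auto simp: ray_def intro: exI[of _ 1])
    then have "adjoint A e \<noteq> 0"
      using adjoint_normal_cone_nonzero[OF sm lin d b p] by blast
    then show ?thesis
      using normal_cone_preimage_unique_normal[OF _ _ lin p e(2,1)] reg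
      by (simp add: regular_cone_def)
  qed
qed

text \<open>Every solution x has A x + b on the ray of d, which is orthogonal to w; so both
  signs of the adjoint of w are normal to the solution set at x1 with A x1 + b = d, whereas the
  adjoint maps the normal cone of K at d onto a single ray.\<close>
lemma not_ACQ_if_in_range:
  fixes K :: "'b::euclidean_space set" and A :: "'a::euclidean_space \<Rightarrow> 'b"
  assumes sm: "smooth_cone K" and lin: "linear A" and d: "d \<in> range A" "d \<in> K" "d \<noteq> 0"
    and fr: "range A \<inter> K \<subseteq> frontier K" and b: "b \<in> range A"
    and w: "w \<in> range A" "w \<noteq> 0" "inner w d = 0"
  shows "\<not> ACQ A b K"
proof
  assume acq: "ACQ A b K"
  define S where "S = {x. A x + b \<in> K}"
  define g where "g = adjoint A w"
  have L: "subspace (range A)"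
    using lin by (rule range_linear_subspace)
  obtain x0 xd xw where x: "b = A x0" "d = A xd" "w = A xw"
    using b d(1) w(1) by blast
  define x1 where "x1 = xd - x0"
  have x1: "A x1 + b = d"
    using x by (simp add: x1_def linear_diff[OF lin])
  have "inner g (y - x1) = 0" if "y \<in> S" for y
  proof -
    have "A y + b \<in> range A \<inter> K"
      using that b L by (auto simp: S_def subspace_add)
    then obtain l where "A y + b = l *\<^sub>R d"
      using subspace_inter_smooth_cone_ray[OF sm L d fr] by (auto simp: ray_def)
    moreover have "inner g (y - x1) = inner w ((A y + b) - (A x1 + b))"
      using adjoint_clauses(2)[OF lin] linear_diff[OF lin] by (simp add: g_def)
    ultimately show ?thesis
      using x1 w(3) by (simp add: inner_diff_right inner_commute)
  qed
  moreover have "x1 \<in> S"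
    using x1 d(2) by (simp add: S_def)
  ultimately have "g \<in> normal_cone S x1" "- g \<in> normal_cone S x1"
    by (auto simp: normal_cone_iff)
  moreover obtain e where e: "norm e = 1" "normal_cone K d = ray e"
    using smooth_cone_normal_cone_ray[OF sm _ d(3)] fr d by blast
  moreover have "normal_cone S x1 = adjoint A ` normal_cone K d"
    using acq \<open>x1 \<in> S\<close> x1 by (auto simp: ACQ_def S_def)
  ultimately have "g = 0"
    using linear_image_ray[OF adjoint_linear[OF lin]] ray_pointed by metis
  moreover have "inner g xw = inner w w"
    using adjoint_clauses(2)[OF lin] x(3) by (simp add: g_def inner_commute)
  ultimately show False
    using w(2) by simp
qed

section \<open>Error bounds\<close>

lemma infdist_scaleR_cone:
  fixes K :: "'a::real_normed_vector set"
  assumes "cone K" "c > 0"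
  shows "infdist (c *\<^sub>R z) K = c * infdist z K"
proof (cases "K = {}")
  case True
  then show ?thesis
    by (simp add: infdist_def)
next
  case False
  have le: "infdist (t *\<^sub>R y) K \<le> t * infdist y K" if "t > 0" for t y
  proof -
    have "infdist (t *\<^sub>R y) K / t \<le> dist y k" if "k \<in> K" for k
    proof -
      have "infdist (t *\<^sub>R y) K \<le> dist (t *\<^sub>R y) (t *\<^sub>R k)"
        using assms(1) \<open>k \<in> K\<close> \<open>t > 0\<close> by (intro infdist_le) (simp add: cone_def)
      also have "\<dots> = t * dist y k"
        using \<open>t > 0\<close> by (simp add: dist_norm flip: scaleR_diff_right)
      finally show ?thesis
        using \<open>t > 0\<close> by (simp add: field_simps)
    qed
    then have "infdist (t *\<^sub>R y) K / t \<le> infdist y K"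
      by (rule infdist_greatest[OF False])
    then show ?thesis
      using \<open>t > 0\<close> by (simp add: field_simps)
  qed
  have "infdist z K \<le> inverse c * infdist (c *\<^sub>R z) K"
    using le[of "inverse c" "c *\<^sub>R z"] assms(2) by simp
  then show ?thesis
    using le[of c z] assms(2) by (simp add: field_simps)
qed

lemma closed_affine_preimage:
  fixes A :: "'a::euclidean_space \<Rightarrow> 'b::euclidean_space"
  assumes "linear A" "closed K"
  shows "closed {x. A x + b \<in> K}"
  using continuous_closed_vimage[OF assms(2) continuous_at_affine[OF assms(1)]] by (simp add: vimage_def)

lemma error_bound_scaled_inclusion:
  fixes K :: "'b::euclidean_space set" and A :: "'a::euclidean_space \<Rightarrow> 'b"
  assumes cone: "cone K" and cl: "closed K" and lin: "linear A"
    and ne: "{x. A x + b \<in> K} \<noteq> {}" and "\<alpha> > 0"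
    and bound: "\<And>x. infdist x {x. A x + b \<in> K} \<le> \<alpha> * infdist (A x + b) K"
    and "t > 0"
  shows "\<exists>y. A y + t *\<^sub>R b \<in> K \<and> dist x y \<le> \<alpha> * (infdist (A x) K + t * norm b)"
proof -
  define S where "S = {x. A x + b \<in> K}"
  define y where "y = closest_point S (x /\<^sub>R t)"
  have "closed S"
    using closed_affine_preimage[OF lin cl] by (simp add: S_def)
  then have "y \<in> S" and dist_y: "dist (x /\<^sub>R t) y = infdist (x /\<^sub>R t) S"
    using closest_point_in_set[of S] infdist_closest_point[of S] ne
    by (auto simp: y_def S_def dist_norm)
  have "A (t *\<^sub>R y) + t *\<^sub>R b \<in> K"
    using \<open>y \<in> S\<close> cone \<open>t > 0\<close> by (simp add: S_def linear_scale[OF lin] cone_def flip: scaleR_add_right)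
  moreover have "dist x (t *\<^sub>R y) \<le> \<alpha> * (infdist (A x) K + t * norm b)"
  proof -
    have "x - t *\<^sub>R y = t *\<^sub>R (x /\<^sub>R t - y)"
      using \<open>t > 0\<close> by (simp add: scaleR_diff_right)
    then have "dist x (t *\<^sub>R y) = t * infdist (x /\<^sub>R t) S"
      using \<open>t > 0\<close> by (simp add: dist_norm flip: dist_y)
    also have "\<dots> \<le> t * (\<alpha> * infdist (A (x /\<^sub>R t) + b) K)"
      using bound \<open>t > 0\<close> by (simp add: S_def)
    also have "A (x /\<^sub>R t) + b = (1 / t) *\<^sub>R (A x + t *\<^sub>R b)"
      using \<open>t > 0\<close> by (simp add: linear_scale[OF lin] scaleR_add_right divide_inverse_commute)
    also have "t * (\<alpha> * infdist \<dots> K) = \<alpha> * infdist (A x + t *\<^sub>R b) K"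
      using \<open>t > 0\<close> infdist_scaleR_cone[OF cone, of "1 / t"] by simp
    also have "\<dots> \<le> \<alpha> * (infdist (A x) K + t * norm b)"
      using infdist_triangle[of "A x + t *\<^sub>R b" K "A x"] \<open>\<alpha> > 0\<close> \<open>t > 0\<close>
      by (intro mult_left_mono) (auto simp: dist_norm)
    finally show ?thesis .
  qed
  ultimately show ?thesis
    by blast
qed

text \<open>Letting t \<rightarrow> 0 in the scaled inclusions; the near-solutions stay bounded, so a
  subsequence converges to a solution of A y \<in> K.\<close>
lemma global_error_bound_homogeneous:
  fixes K :: "'b::euclidean_space set" and A :: "'a::euclidean_space \<Rightarrow> 'b"
  assumes cone: "cone K" and cl: "closed K" and lin: "linear A"
    and geb: "global_error_bound A b K" and ne: "{x. A x + b \<in> K} \<noteq> {}"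
  shows "global_error_bound A 0 K"
proof -
  obtain \<alpha> where "\<alpha> > 0" and bound: "\<And>x. infdist x {x. A x + b \<in> K} \<le> \<alpha> * infdist (A x + b) K"
    using geb by (auto simp: global_error_bound_def)
  have "infdist x {x. A x \<in> K} \<le> \<alpha> * infdist (A x) K" for x
  proof -
    define D where "D = infdist (A x) K"
    define t where "t n = inverse (real (Suc n))" for n
    have "\<forall>n. \<exists>y. A y + t n *\<^sub>R b \<in> K \<and> dist x y \<le> \<alpha> * (D + t n * norm b)"
      using error_bound_scaled_inclusion[OF cone cl lin ne \<open>\<alpha> > 0\<close> bound] by (simp add: t_def D_def)
    then obtain Y where Y: "\<And>n. A (Y n) + t n *\<^sub>R b \<in> K"
      and dist_Y: "\<And>n. dist x (Y n) \<le> \<alpha> * (D + t n * norm b)"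
      by metis
    have "dist x (Y n) \<le> \<alpha> * (D + norm b)" for n
    proof -
      have "t n * norm b \<le> norm b"
        by (simp add: t_def mult_left_le_one_le inverse_le_1_iff)
      then show ?thesis
        using dist_Y[of n] \<open>\<alpha> > 0\<close> by (smt (verit) mult_left_mono)
    qed
    then have "bounded (range Y)"
      unfolding bounded_def by blast
    then obtain y r where r: "strict_mono r" and Yr: "(Y \<circ> r) \<longlonglongrightarrow> y"
      using bounded_imp_convergent_subsequence by blast
    have tr: "(t \<circ> r) \<longlonglongrightarrow> 0"
      using LIMSEQ_subseq_LIMSEQ[OF LIMSEQ_inverse_real_of_nat r] by (simp add: t_def o_def)
    have "(\<lambda>n. A (Y (r n))) \<longlonglongrightarrow> A y"
      using isCont_tendsto_compose[OF linear_continuous_at Yr[unfolded o_def]] lin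
      by (simp add: linear_conv_bounded_linear)
    then have "(\<lambda>n. A (Y (r n)) + t (r n) *\<^sub>R b) \<longlonglongrightarrow> A y + 0 *\<^sub>R b"
      using tr[unfolded o_def] by (intro tendsto_add tendsto_scaleR tendsto_const)
    with Y have "A y + 0 *\<^sub>R b \<in> K"
      by (rule closed_sequentially[OF cl])
    then have "infdist x {x. A x \<in> K} \<le> dist x y"
      by (intro infdist_le) simp
    also have "\<dots> \<le> \<alpha> * (D + 0 * norm b)"
    proof (rule LIMSEQ_le)
      show "(\<lambda>n. dist x (Y (r n))) \<longlonglongrightarrow> dist x y"
        using Yr[unfolded o_def] by (intro tendsto_dist tendsto_const)
      show "(\<lambda>n. \<alpha> * (D + t (r n) * norm b)) \<longlonglongrightarrow> \<alpha> * (D + 0 * norm b)"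
        using tr[unfolded o_def] by (intro tendsto_mult tendsto_add tendsto_const)
      show "\<exists>N. \<forall>n\<ge>N. dist x (Y (r n)) \<le> \<alpha> * (D + t (r n) * norm b)"
        using dist_Y by blast
    qed
    finally show ?thesis
      by (simp add: D_def)
  qed
  then show ?thesis
    using \<open>\<alpha> > 0\<close> by (auto simp: global_error_bound_def)
qed

text \<open>If A y \<in> K forces A y onto the ray of d, the point d + \<tau> w with w \<bottom> d is at distance at
  least \<tau>/B from the solutions, B a bound for A, hence at distance at least \<tau>/(\<alpha> B) from K.\<close>
lemma global_error_bound_orthogonal_growth:
  fixes K :: "'b::euclidean_space set" and A :: "'a::euclidean_space \<Rightarrow> 'b"
  assumes lin: "linear A" and geb: "global_error_bound A 0 K"
    and d: "d \<in> range A" "d \<in> K" and ray: "range A \<inter> K \<subseteq> ray d"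
    and w: "w \<in> range A" "norm w = 1" "inner w d = 0"
  shows "\<exists>c>0. \<forall>\<tau>>0. c * \<tau> \<le> infdist (d + \<tau> *\<^sub>R w) K"
proof -
  obtain \<alpha> where "\<alpha> > 0" and bound: "\<And>x. infdist x {x. A x \<in> K} \<le> \<alpha> * infdist (A x) K"
    using geb by (auto simp: global_error_bound_def)
  obtain B where "B > 0" and B: "\<And>x. norm (A x) \<le> B * norm x"
    using linear_bounded_pos[OF lin] by blast
  have "1 / (\<alpha> * B) * \<tau> \<le> infdist (d + \<tau> *\<^sub>R w) K" if "\<tau> > 0" for \<tau>
  proof -
    obtain xd xw where "d = A xd" "w = A xw"
      using d(1) w(1) by blast
    define x where "x = xd + \<tau> *\<^sub>R xw"
    have Ax: "A x = d + \<tau> *\<^sub>R w"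
      using \<open>d = A xd\<close> \<open>w = A xw\<close> by (simp add: x_def linear_add[OF lin] linear_scale[OF lin])
    have "\<tau> / B \<le> dist x y" if yK: "A y \<in> K" for y
    proof -
      obtain l where "A y = l *\<^sub>R d"
        using ray yK by (auto simp: ray_def)
      moreover have "inner w w = 1"
        using w(2) by (simp add: dot_square_norm)
      ultimately have "\<tau> = inner (A x - A y) w"
        using Ax w(3) by (simp add: inner_diff_left inner_add_left inner_commute[of d w])
      also have "\<dots> \<le> norm (A (x - y))"
        using norm_cauchy_schwarz[of "A x - A y" w] w(2) by (simp add: linear_diff[OF lin])
      also have "\<dots> \<le> B * dist x y"
        using B[of "x - y"] by (simp add: dist_norm)
      finally show ?thesis
        using \<open>B > 0\<close> by (simp add: field_simps)
    qed
    then have "\<tau> / B \<le> infdist x {x. A x \<in> K}"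
      using d by (intro infdist_greatest) auto
    also have "\<dots> \<le> \<alpha> * infdist (d + \<tau> *\<^sub>R w) K"
      using bound[of x] Ax by simp
    finally show ?thesis
      using \<open>\<alpha> > 0\<close> \<open>B > 0\<close> by (simp add: field_simps)
  qed
  then show ?thesis
    using \<open>\<alpha> > 0\<close> \<open>B > 0\<close> by (intro exI[of _ "1 / (\<alpha> * B)"]) auto
qed

text \<open>A direction w \<in> range A orthogonal to d can be chosen with e \<bullet> w \<le> 0 for the unit
  normal e at d; then d + \<tau> (w - \<eta> e) \<in> K for some \<tau> > 0, so the distance of d + \<tau> w to K is
  at most \<tau> \<eta> for every \<eta> > 0, against the linear growth above.\<close>
lemma no_global_error_bound_homogeneous:
  fixes K :: "'b::euclidean_space set" and A :: "'a::euclidean_space \<Rightarrow> 'b"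
  assumes sm: "smooth_cone K" and lin: "linear A" and d: "d \<in> range A" "d \<in> K" "d \<noteq> 0"
    and fr: "range A \<inter> K \<subseteq> frontier K" and w: "w \<in> range A" "w \<noteq> 0" "inner w d = 0"
  shows "\<not> global_error_bound A 0 K"
proof
  assume geb: "global_error_bound A 0 K"
  have L: "subspace (range A)"
    using lin by (rule range_linear_subspace)
  have reg: "regular_cone K"
    using sm by (rule smooth_cone_regular)
  obtain e where e: "norm e = 1" "normal_cone K d = ray e"
    using smooth_cone_normal_cone_ray[OF sm _ d(3)] fr d by blast
  obtain u where u: "u \<in> range A" "norm u = 1" "inner u d = 0" "inner e u \<le> 0"
  proof (cases "inner e (sgn w) \<le> 0")
    case True
    then show ?thesis
      using that[of "sgn w"] w L by (simp add: sgn_div_norm norm_sgn subspace_scale)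
  next
    case False
    then show ?thesis
      using that[of "- sgn w"] w L by (simp add: sgn_div_norm norm_sgn subspace_scale subspace_neg)
  qed
  obtain c where "c > 0" and growth: "\<And>\<tau>. \<tau> > 0 \<Longrightarrow> c * \<tau> \<le> infdist (d + \<tau> *\<^sub>R u) K"
    using global_error_bound_orthogonal_growth[OF lin geb d(1,2) _ u(1-3)]
      subspace_inter_smooth_cone_ray[OF sm L d fr] by blast
  have "inner e (u - (c / 2) *\<^sub>R e) < 0"
    using u(4) e(1) \<open>c > 0\<close> by (simp add: inner_diff_right dot_square_norm)
  then obtain \<tau> where "\<tau> > 0" and in_K: "d + \<tau> *\<^sub>R (u - (c / 2) *\<^sub>R e) \<in> K"
    using feasible_direction_unique_normal[OF _ _ d(2) e(2,1)] reg by (auto simp: regular_cone_def)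
  have "c * \<tau> \<le> infdist (d + \<tau> *\<^sub>R u) K"
    using growth[OF \<open>\<tau> > 0\<close>] .
  also have "\<dots> \<le> dist (d + \<tau> *\<^sub>R u) (d + \<tau> *\<^sub>R (u - (c / 2) *\<^sub>R e))"
    using in_K by (rule infdist_le)
  also have "\<dots> = \<tau> * (c / 2)"
    using \<open>\<tau> > 0\<close> \<open>c > 0\<close> e(1) by (simp add: dist_norm algebra_simps)
  finally show False
    using \<open>\<tau> > 0\<close> \<open>c > 0\<close> by simp
qed

lemma closed_cone_least_point_on_line:
  fixes K :: "'a::euclidean_space set"
  assumes cl: "closed K" and cone: "cone K" and d: "- d \<notin> K" and t: "b + t *\<^sub>R d \<in> K"
  shows "\<exists>t0. b + t0 *\<^sub>R d \<in> K \<and> (\<forall>t. b + t *\<^sub>R d \<in> K \<longrightarrow> t0 \<le> t)"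
proof -
  define T where "T = {t. b + t *\<^sub>R d \<in> K}"
  have "closed T"
    using continuous_closed_vimage[OF cl, of "\<lambda>t. b + t *\<^sub>R d"] by (simp add: T_def vimage_def)
  define \<delta> where "\<delta> = infdist (- d) K"
  have "\<delta> > 0"
    using infdist_pos_not_in_closed[OF cl _ d] t by (auto simp: \<delta>_def)
  have "- norm b / \<delta> \<le> s" if "s \<in> T" for s
  proof (cases "s < 0")
    case True
    have "\<delta> * (- s) = infdist ((- s) *\<^sub>R (- d)) K"
      using infdist_scaleR_cone[OF cone, of "- s" "- d"] True by (simp add: \<delta>_def)
    also have "\<dots> = infdist (s *\<^sub>R d) K"
      by simp
    also have "\<dots> \<le> dist (s *\<^sub>R d) (b + s *\<^sub>R d)"
      using that by (intro infdist_le) (simp add: T_def)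
    also have "\<dots> = norm b"
      by (simp add: dist_norm)
    finally show ?thesis
      using \<open>\<delta> > 0\<close> by (simp add: field_simps)
  next
    case False
    moreover have "- norm b / \<delta> \<le> 0"
      using \<open>\<delta> > 0\<close> by (simp add: divide_nonneg_pos)
    ultimately show ?thesis
      by linarith
  qed
  then have "bdd_below T"
    by (auto simp: bdd_below_def)
  moreover have "T \<noteq> {}"
    using t by (auto simp: T_def)
  ultimately show ?thesis
    using closed_contains_Inf[OF _ _ \<open>closed T\<close>] cInf_lower[of _ T]
    by (auto simp: T_def intro!: exI[of _ "Inf T"])
qed

text \<open>If the entry point p = b + t0 d is the vertex this is homogeneity; otherwise p lies on the
  frontier and its unit normal e satisfies e \<bullet> d < 0, because e \<bullet> d = 0 would put p on the
  ray of d and make the line pass through 0 \<in> K before t0.\<close>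
lemma smooth_cone_line_distance_growth:
  fixes K :: "'a::euclidean_space set"
  assumes sm: "smooth_cone K" and d: "d \<in> K" "d \<noteq> 0"
    and t0: "b + t0 *\<^sub>R d \<in> K" and least: "\<And>t. b + t *\<^sub>R d \<in> K \<Longrightarrow> t0 \<le> t"
  shows "\<exists>c>0. \<forall>s<t0. c * (t0 - s) \<le> infdist (b + s *\<^sub>R d) K"
proof -
  have reg: "regular_cone K"
    using sm by (rule smooth_cone_regular)
  then have cone: "cone K" and cl: "closed K"
    by (auto simp: regular_cone_def)
  define p where "p = b + t0 *\<^sub>R d"
  have line: "b + s *\<^sub>R d = p - (t0 - s) *\<^sub>R d" for s
    by (simp add: p_def algebra_simps)
  show ?thesis
  proof (cases "p = 0")
    case True
    have "- d \<notin> K"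
      using regular_cone_pointed[OF reg d(1)] d(2) by auto
    then have "infdist (- d) K > 0"
      using infdist_pos_not_in_closed[OF cl] d(1) by auto
    moreover have "infdist (- d) K * (t0 - s) = infdist (b + s *\<^sub>R d) K" if "s < t0" for s
      using infdist_scaleR_cone[OF cone, of "t0 - s" "- d"] that True by (simp add: line)
    ultimately show ?thesis
      by (intro exI[of _ "infdist (- d) K"]) auto
  next
    case False
    have "p \<notin> interior K"
    proof
      assume "p \<in> interior K"
      then obtain \<eta> where "\<eta> > 0" "p + \<eta> *\<^sub>R (- d) \<in> K"
        using interior_exists_step by blast
      then have "t0 \<le> t0 - \<eta>"
        by (intro least) (simp add: line)
      then show False
        using \<open>\<eta> > 0\<close> by simp
    qed
    then have "p \<in> frontier K"
      using t0 cl by (simp add: frontier_def p_def)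
    then obtain e where e: "norm e = 1" "normal_cone K p = ray e"
      using smooth_cone_normal_cone_ray[OF sm _ False] by blast
    then have eN: "e \<in> normal_cone K p" "e \<noteq> 0"
      by (auto simp: ray_def intro: exI[of _ 1])
    have "p + d \<in> K"
      using convex_cone_add[OF regular_cone_convex_cone[OF reg] _ d(1)] t0 by (simp add: p_def)
    then have "inner e d \<le> 0"
      using eN(1) unfolding normal_cone_iff by (metis add_diff_cancel_left')
    moreover have "inner e d \<noteq> 0"
    proof
      assume "inner e d = 0"
      then obtain l where "l \<ge> 0" "p = l *\<^sub>R d"
        using smooth_cone_orthogonal_normal_ray[OF sm _ eN d] t0 by (auto simp: p_def ray_def)
      have "b + (t0 - l) *\<^sub>R d \<in> K"
        using \<open>p = l *\<^sub>R d\<close> convex_cone_contains_0[OF regular_cone_convex_cone[OF reg]]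
        by (simp add: line algebra_simps)
      then have "t0 \<le> t0 - l"
        by (rule least)
      then have "p = 0"
        using \<open>l \<ge> 0\<close> \<open>p = l *\<^sub>R d\<close> by simp
      then show False
        using False by simp
    qed
    ultimately have "- inner e d > 0"
      by simp
    moreover have "- inner e d * (t0 - s) \<le> infdist (b + s *\<^sub>R d) K" for s
      using inner_normal_cone_le_infdist[OF eN(1) e(1), of "b + s *\<^sub>R d"]
      by (simp add: line inner_diff_right algebra_simps)
    ultimately show ?thesis
      by blast
  qed
qed

lemma global_error_bound_dim_one:
  fixes K :: "'b::euclidean_space set" and A :: "'a::euclidean_space \<Rightarrow> 'b"
  assumes sm: "smooth_cone K" and lin: "linear A" and d: "d \<in> range A" "d \<in> K" "d \<noteq> 0"
    and dim: "dim (range A) = 1" and ne: "{x. A x + b \<in> K} \<noteq> {}"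
  shows "global_error_bound A b K"
proof -
  have reg: "regular_cone K"
    using sm by (rule smooth_cone_regular)
  then have cone: "cone K" and cl: "closed K" and "- d \<notin> K"
    using regular_cone_pointed[OF reg d(2)] d(3) by (auto simp: regular_cone_def)
  have "\<forall>x. \<exists>s. A x = s *\<^sub>R d"
    using dim_eq_1_subset_span_singleton[OF dim d(1,3)] by (auto simp: span_singleton)
  then obtain \<sigma> where \<sigma>: "\<And>x. A x = \<sigma> x *\<^sub>R d"
    by metis
  obtain x0 where "A x0 + b \<in> K"
    using ne by auto
  then obtain t0 where t0: "b + t0 *\<^sub>R d \<in> K" and least: "\<And>t. b + t *\<^sub>R d \<in> K \<Longrightarrow> t0 \<le> t"
    using closed_cone_least_point_on_line[OF cl cone \<open>- d \<notin> K\<close>, of b "\<sigma> x0"] \<sigma>[of x0]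
    by (auto simp: add.commute)
  obtain c where "c > 0" and growth: "\<And>s. s < t0 \<Longrightarrow> c * (t0 - s) \<le> infdist (b + s *\<^sub>R d) K"
    using smooth_cone_line_distance_growth[OF sm d(2,3) t0 least] by blast
  obtain xd where xd: "A xd = d"
    using d(1) by auto
  define \<alpha> where "\<alpha> = (norm xd + 1) / c"
  have "\<alpha> > 0"
    using \<open>c > 0\<close> by (simp add: \<alpha>_def add_nonneg_pos)
  have "infdist x {x. A x + b \<in> K} \<le> \<alpha> * infdist (A x + b) K" for x
  proof (cases "t0 \<le> \<sigma> x")
    case True
    have "b + \<sigma> x *\<^sub>R d = (b + t0 *\<^sub>R d) + (\<sigma> x - t0) *\<^sub>R d"
      by (simp add: algebra_simps)
    also have "\<dots> \<in> K"
      using t0 d(2) True convex_cone_add[OF regular_cone_convex_cone[OF reg]] cone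
      by (simp add: cone_def)
    finally have "A x + b \<in> K"
      using \<sigma>[of x] by (simp add: add.commute)
    then show ?thesis
      using \<open>\<alpha> > 0\<close> by (simp add: infdist_nonneg)
  next
    case False
    define x' where "x' = x + (t0 - \<sigma> x) *\<^sub>R xd"
    have "A x' = A x + (t0 - \<sigma> x) *\<^sub>R A xd"
      by (simp only: x'_def linear_add[OF lin] linear_scale[OF lin])
    then have "A x' + b = b + t0 *\<^sub>R d"
      using \<sigma>[of x] xd by (simp add: algebra_simps)
    then have "infdist x {x. A x + b \<in> K} \<le> dist x x'"
      using t0 by (intro infdist_le) (simp add: add.commute)
    also have "\<dots> = (t0 - \<sigma> x) * norm xd"
      using False by (simp add: x'_def dist_norm)
    also have "\<dots> \<le> \<alpha> * (c * (t0 - \<sigma> x))"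
      using \<open>c > 0\<close> False by (simp add: \<alpha>_def field_simps)
    also have "\<dots> \<le> \<alpha> * infdist (A x + b) K"
      using growth[of "\<sigma> x"] False \<sigma>[of x] \<open>\<alpha> > 0\<close> by (simp add: add.commute)
    finally show ?thesis .
  qed
  then show ?thesis
    using \<open>\<alpha> > 0\<close> by (auto simp: global_error_bound_def)
qed

theorem theorem5:
  fixes K :: "(real^'m) set" and A :: "real^'n \<Rightarrow> real^'m" and b :: "real^'m"
  assumes "smooth_cone K" and "linear A"
    and "{x. A x + b \<in> K} \<noteq> {}"
    and "range A \<inter> K \<noteq> {0}" and "range A \<inter> K \<subseteq> frontier K"
  shows "(dim (range A) \<noteq> 1 \<and> b \<in> range A \<longrightarrow> \<not> ACQ A b K \<and> \<not> global_error_bound A b K)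
    \<and> (dim (range A) \<noteq> 1 \<and> b \<notin> range A \<longrightarrow> ACQ A b K \<and> \<not> global_error_bound A b K)
    \<and> (dim (range A) = 1 \<longrightarrow> global_error_bound A b K)"
proof -
  note sm = assms(1) and lin = assms(2) and ne = assms(3) and fr = assms(5)
  have reg: "regular_cone K"
    using sm by (rule smooth_cone_regular)
  then have cone: "cone K" and cl: "closed K"
    by (auto simp: regular_cone_def)
  have "0 \<in> K"
    using convex_cone_contains_0[OF regular_cone_convex_cone[OF reg]] .
  then have "0 \<in> range A \<inter> K"
    using linear_0[OF lin] by (metis IntI rangeI)
  then obtain d where d: "d \<in> range A" "d \<in> K" "d \<noteq> 0"
    using assms(4) by blast
  have no_geb: "\<not> global_error_bound A b K" and orth: "\<exists>w\<in>range A. w \<noteq> 0 \<and> inner w d = 0"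
    if "dim (range A) \<noteq> 1"
  proof -
    show orth: "\<exists>w\<in>range A. w \<noteq> 0 \<and> inner w d = 0"
      using subspace_orthogonal_nonzero[OF range_linear_subspace[OF lin] d(1,3) that] .
    show "\<not> global_error_bound A b K"
      using global_error_bound_homogeneous[OF cone cl lin _ ne]
        no_global_error_bound_homogeneous[OF sm lin d fr] orth by blast
  qed
  show ?thesis
    using no_geb orth not_ACQ_if_in_range[OF sm lin d fr] ACQ_if_not_in_range[OF sm lin d]
      global_error_bound_dim_one[OF sm lin d _ ne] by blast
qed

end
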